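(* The forcing notion $Q_*$ is forcing equivalent to Sacks forcing.
   Context: Terms. Fix a set $X$ of variable symbols, each taking values in $\{0,1\}$. An $X$-term $t$ is given by a finite sequence of variables $(v_0,\dots,v_{l-1})$ ($l\ge0$) and a function $f:2^l\to2$; a variable $v$ is identified with the term $((v),\mathrm{id})$. An assignment is a function $a:X\to2$; it extends to terms by $t\circ a=f(v_0\circ a,\dots,v_{l-1}\circ a)$. A substitution $\phi$ maps each variable to an $X$-term; $t\circ\phi$ is obtained by replacing each variable $v$ in $t$ by $\phi(v)$, and for a family $\bar t=(t_i)$, $\bar t\circ\phi=(t_i\circ\phi)$. Terms are identified modulo $t=^*s$ iff $t\circ a=s\circ a$ for all assignments $a$. A term depends only on variables in $Y$ if it is $=^*$ to a term using only variables from $Y$. A term or variable $s$ is determined by terms $t_0,\dots,t_n$ if for all assignments $a,b$, $(t_i\circ a)_{i\le n}=(t_i\circ b)_{i\le n}$ implies $s\circ a=s\circ b$. Let $\tau(n,m)=n+\tfrac12(n+m)(n+m+1)$ and $(i,j)\unlhd(n,m)$ iff $\tau(i,j)\le\tau(n,m)$. With $X=\{x_{i,j}:i,j\in\omega\}$, $Q_*$ is the set of squares $\bar t=(t_{n,m})_{n,m\in\omega}$ of terms such that (1) $t_{n,m}$ depends only on variables $x_{i,j}$ with $(i,j)\unlhd(n,m)$, and (2) each $x_{i,j}$ is determined by finitely many $t_{n,m}$. An element $\phi\in Q_*$ is regarded as the substitution $x_{i,j}\mapsto\phi_{i,j}$; $\bar t\le\bar s$ iff there is $\phi\in Q_*$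 with $\bar t=\bar s\circ\phi$. Sacks forcing is the set of perfect subtrees of $2^{<\omega}$ ordered by inclusion. *)

theory Defs
  imports Main "HOL-Library.Sublist"
begin

text \<open>An X-term is a finite sequence of variables (v_0,...,v_(l-1)) together with
a function f : 2^l -> 2, represented as a function on bool lists (only its values on
lists of length l matter).\<close>
type_synonym 'v trm = "'v list \<times> (bool list \<Rightarrow> bool)"

definition var_trm :: "'v \<Rightarrow> 'v trm" where
  "var_trm v = ([v], \<lambda>bs. hd bs)"

definition eval_trm :: "'v trm \<Rightarrow> ('v \<Rightarrow> bool) \<Rightarrow> bool" where
  "eval_trm t a = snd t (map a (fst t))"

fun chunks :: "'v trm list \<Rightarrow> bool list \<Rightarrow> bool list" where
  "chunks [] bs = []"
| "chunks (t # ts) bs = snd t (take (length (fst t)) bs) # chunks ts (drop (length (fst t)) bs)"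

definition subst_trm :: "'v trm \<Rightarrow> ('v \<Rightarrow> 'v trm) \<Rightarrow> 'v trm" where
  "subst_trm t \<phi> = (concat (map (\<lambda>v. fst (\<phi> v)) (fst t)),
                     \<lambda>bs. snd t (chunks (map \<phi> (fst t)) bs))"

definition trm_eq :: "'v trm \<Rightarrow> 'v trm \<Rightarrow> bool" (infix "=\<^sup>*" 50) where
  "t =\<^sup>* s \<longleftrightarrow> (\<forall>a. eval_trm t a = eval_trm s a)"

definition depends_only :: "'v trm \<Rightarrow> 'v set \<Rightarrow> bool" where
  "depends_only t Y \<longleftrightarrow> (\<exists>s. set (fst s) \<subseteq> Y \<and> t =\<^sup>* s)"

type_synonym idx = "nat \<times> nat"
type_synonym square = "idx \<Rightarrow> idx trm"

definition tau :: "idx \<Rightarrow> nat" where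
  "tau p = fst p + ((fst p + snd p) * (fst p + snd p + 1)) div 2"

definition tri_le :: "idx \<Rightarrow> idx \<Rightarrow> bool" where
  "tri_le p q \<longleftrightarrow> tau p \<le> tau q"

definition var_determined_by :: "idx \<Rightarrow> square \<Rightarrow> idx set \<Rightarrow> bool" where
  "var_determined_by x t F \<longleftrightarrow>
     (\<forall>a b. (\<forall>p\<in>F. eval_trm (t p) a = eval_trm (t p) b) \<longrightarrow> a x = b x)"

definition Qstar :: "square set" where
  "Qstar = {t. (\<forall>p. depends_only (t p) {x. tri_le x p})
              \<and> (\<forall>x. \<exists>F. finite F \<and> var_determined_by x t F)}"

definition subst_square :: "square \<Rightarrow> square \<Rightarrow> square" where
  "subst_square s \<phi> = (\<lambda>p. subst_trm (s p) \<phi>)"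

definition Qstar_le :: "square \<Rightarrow> square \<Rightarrow> bool" where
  "Qstar_le t s \<longleftrightarrow> (\<exists>\<phi>\<in>Qstar. \<forall>p. t p =\<^sup>* subst_square s \<phi> p)"

definition perfect_tree :: "bool list set \<Rightarrow> bool" where
  "perfect_tree T \<longleftrightarrow> T \<noteq> {}
     \<and> (\<forall>s\<in>T. \<forall>u. prefix u s \<longrightarrow> u \<in> T)
     \<and> (\<forall>s\<in>T. \<exists>u. prefix s u \<and> u @ [False] \<in> T \<and> u @ [True] \<in> T)"

definition Sacks :: "bool list set set" where
  "Sacks = {T. perfect_tree T}"

definition Sacks_le :: "bool list set \<Rightarrow> bool list set \<Rightarrow> bool" where
  "Sacks_le S T \<longleftrightarrow> S \<subseteq> T"

text \<open>Regular open subsets of a preorder (P, le) (topology of downward closed sets);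
they form the Boolean completion RO(P).\<close>
definition regular_open :: "'a set \<Rightarrow> ('a \<Rightarrow> 'a \<Rightarrow> bool) \<Rightarrow> 'a set set" where
  "regular_open P le = {U. U \<subseteq> P \<and>
      U = {p\<in>P. \<forall>q\<in>P. le q p \<longrightarrow> (\<exists>r\<in>U. le r q)}}"

text \<open>Two forcing notions are forcing equivalent iff their Boolean completions are isomorphic.\<close>
definition forcing_equivalent ::
  "'a set \<Rightarrow> ('a \<Rightarrow> 'a \<Rightarrow> bool) \<Rightarrow> 'b set \<Rightarrow> ('b \<Rightarrow> 'b \<Rightarrow> bool) \<Rightarrow> bool" where
  "forcing_equivalent P leP Q leQ \<longleftrightarrow>
     (\<exists>h. bij_betw h (regular_open P leP) (regular_open Q leQ)
        \<and> (\<forall>U\<in>regular_open P leP. \<forall>V\<in>regular_open P leP. U \<subseteq> V \<longleftrightarrow> h U \<subseteq> h V))"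

end

theory Submission
  imports Defs "HOL-Library.Nat_Bijection"
begin

text \<open>Read the variable x_p as bit number prod_encode p of a point of Cantor space; tau is
exactly the Cantor pairing prod_encode. A square t then becomes a map F_t on Cantor space,
condition (1) says that F_t is causal (output bit k depends only on input bits up to k),
condition (2) that it is determining (each input bit is recovered from finitely many output
bits), and t \<le> s means F_t = F_s \<circ> \<phi> for such a \<phi>.

Send t to the tree of initial segments of outputs of F_t. This tree is perfect, the map is
monotone, and its image is dense: every perfect tree contains the range tree of its canonical
parametrisation by splitting nodes. Conversely, if the range tree of F_t lies inside that of
F_s, then F_t lifts continuously through F_s, and precomposing with a causal map that
spreads out the input bits turns the lift into a causal one: F_t \<circ> \<psi> = F_s \<circ> \<phi>. This yields the
two remaining properties of a dense projection (refining below a tree, and compatibility when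
the trees are nested), and a dense projection induces an isomorphism of the regular open
algebras.\<close>

section \<open>Causal and determining maps on Cantor space\<close>

definition agree_below :: "nat \<Rightarrow> (nat \<Rightarrow> 'a) \<Rightarrow> (nat \<Rightarrow> 'a) \<Rightarrow> bool" where
  "agree_below n c d \<longleftrightarrow> (\<forall>i<n. c i = d i)"

definition causal :: "((nat \<Rightarrow> bool) \<Rightarrow> nat \<Rightarrow> bool) \<Rightarrow> bool" where
  "causal F \<longleftrightarrow> (\<forall>n c d. agree_below n c d \<longrightarrow> agree_below n (F c) (F d))"

definition determining :: "((nat \<Rightarrow> bool) \<Rightarrow> nat \<Rightarrow> bool) \<Rightarrow> bool" where
  "determining F \<longleftrightarrow> (\<forall>n. \<exists>N. \<forall>c d. agree_below N (F c) (F d) \<longrightarrow> agree_below n c d)"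

lemma agree_below_mono: "agree_below n c d \<Longrightarrow> m \<le> n \<Longrightarrow> agree_below m c d"
  by (simp add: agree_below_def)

lemma agree_below_Suc: "agree_below (Suc n) c d \<longleftrightarrow> agree_below n c d \<and> c n = d n"
  by (auto simp: agree_below_def less_Suc_eq)

lemma causal_iff: "causal F \<longleftrightarrow> (\<forall>c d k. agree_below (Suc k) c d \<longrightarrow> F c k = F d k)"
proof
  assume "causal F"
  then show "\<forall>c d (k::nat). agree_below (Suc k) c d \<longrightarrow> F c k = F d k"
    by (auto simp: causal_def agree_below_def)
next
  assume pointwise: "\<forall>c d (k::nat). agree_below (Suc k) c d \<longrightarrow> F c k = F d k"
  show "causal F"
    unfolding causal_def agree_below_def
  proof (intro allI impI)
    fix n k :: nat and c d :: "nat \<Rightarrow> bool"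
    assume "\<forall>i<n. c i = d i" "k < n"
    then have "agree_below (Suc k) c d" by (simp add: agree_below_def)
    then show "F c k = F d k" using pointwise by blast
  qed
qed

lemma causalD: "causal F \<Longrightarrow> agree_below n c d \<Longrightarrow> agree_below n (F c) (F d)"
  by (simp add: causal_def)

lemma determiningE:
  assumes "determining F"
  obtains N where "\<And>c d. agree_below N (F c) (F d) \<Longrightarrow> agree_below n c d"
  using assms unfolding determining_def by blast

lemma causal_id: "causal (\<lambda>c. c)"
  by (simp add: causal_def)

lemma determining_id: "determining (\<lambda>c. c)"
  unfolding determining_def by blast

lemma causal_comp: "causal F \<Longrightarrow> causal G \<Longrightarrow> causal (\<lambda>c. F (G c))"
  by (simp add: causal_def)

lemma determining_comp:
  assumes "determining F" "determining G"
  shows "determining (\<lambda>c. F (G c))"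
  unfolding determining_def
proof
  fix n
  obtain M where "\<And>c d. agree_below M (G c) (G d) \<Longrightarrow> agree_below n c d"
    using determiningE[OF assms(2), where n = n] by blast
  moreover obtain N where "\<And>c d. agree_below N (F c) (F d) \<Longrightarrow> agree_below M c d"
    using determiningE[OF assms(1), where n = M] by blast
  ultimately show "\<exists>N. \<forall>c d. agree_below N (F (G c)) (F (G d)) \<longrightarrow> agree_below n c d"
    by blast
qed

lemma determining_comp_causalD:
  assumes "causal F" "determining (\<lambda>c. F (G c))"
  shows "determining G"
  unfolding determining_def
proof
  fix n
  obtain N where "\<And>c d. agree_below N (F (G c)) (F (G d)) \<Longrightarrow> agree_below n c d"
    using determiningE[OF assms(2), where n = n] by blast
  then show "\<exists>N. \<forall>c d. agree_below N (G c) (G d) \<longrightarrow> agree_below n c d"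
    using causalD[OF assms(1)] by blast
qed

section \<open>Squares as maps on Cantor space\<close>

lemma chunks_map_subst:
  "chunks (map \<phi> vs) (concat (map (\<lambda>v. map a (fst (\<phi> v))) vs)) = map (\<lambda>v. eval_trm (\<phi> v) a) vs"
  by (induction vs) (simp_all add: eval_trm_def)

lemma eval_subst_trm: "eval_trm (subst_trm t \<phi>) a = eval_trm t (\<lambda>v. eval_trm (\<phi> v) a)"
  by (simp add: subst_trm_def eval_trm_def map_concat comp_def
      chunks_map_subst[unfolded eval_trm_def])

lemma depends_only_iff:
  "depends_only t Y \<longleftrightarrow> (\<forall>a b. (\<forall>y\<in>Y. a y = b y) \<longrightarrow> eval_trm t a = eval_trm t b)"
proof
  assume "depends_only t Y"
  then obtain s where s: "set (fst s) \<subseteq> Y" "t =\<^sup>* s" unfolding depends_only_def by blast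
  show "\<forall>a b. (\<forall>y\<in>Y. a y = b y) \<longrightarrow> eval_trm t a = eval_trm t b"
  proof (intro allI impI)
    fix a b :: "'a \<Rightarrow> bool" assume "\<forall>y\<in>Y. a y = b y"
    then have "map a (fst s) = map b (fst s)" using s(1) by auto
    then show "eval_trm t a = eval_trm t b" using s(2) unfolding trm_eq_def eval_trm_def by metis
  qed
next
  assume invariant: "\<forall>a b. (\<forall>y\<in>Y. a y = b y) \<longrightarrow> eval_trm t a = eval_trm t b"
  define ys where "ys = filter (\<lambda>v. v \<in> Y) (fst t)"
  define assign where "assign bs v = (case map_of (zip ys bs) v of Some x \<Rightarrow> x | None \<Rightarrow> False)"
    for bs v
  define s where "s = (ys, \<lambda>bs. eval_trm t (assign bs))"
  have "t =\<^sup>* s"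
    unfolding trm_eq_def
  proof
    fix a
    define a' where "a' v = (if v \<in> Y then a v else False)" for v
    have "eval_trm s a = eval_trm t (assign (map a ys))"
      by (simp add: s_def eval_trm_def)
    also have "\<dots> = eval_trm t a'"
      unfolding eval_trm_def
      by (rule arg_cong[where f = "snd t"]) (auto simp: assign_def a'_def ys_def map_of_zip_map)
    also have "\<dots> = eval_trm t a"
      using invariant by (simp add: a'_def)
    finally show "eval_trm t a = eval_trm s a" ..
  qed
  moreover have "set (fst s) \<subseteq> Y" by (auto simp: s_def ys_def)
  ultimately show "depends_only t Y" unfolding depends_only_def by blast
qed

lemma tau_eq_prod_encode: "tau = prod_encode"
  by (auto simp: tau_def prod_encode_def triangle_def fun_eq_iff)

lemma tri_le_iff_prod_encode: "tri_le x p \<longleftrightarrow> prod_encode x \<le> prod_encode p"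
  by (simp add: tri_le_def tau_eq_prod_encode)

definition fun_of_square :: "square \<Rightarrow> (nat \<Rightarrow> bool) \<Rightarrow> nat \<Rightarrow> bool" where
  "fun_of_square t c k = eval_trm (t (prod_decode k)) (c \<circ> prod_encode)"

lemma fun_of_square_comp_decode:
  "fun_of_square t (a \<circ> prod_decode) k = eval_trm (t (prod_decode k)) a"
  by (simp add: fun_of_square_def comp_def)

lemma causal_fun_of_square_iff:
  "causal (fun_of_square t) \<longleftrightarrow> (\<forall>p. depends_only (t p) {x. tri_le x p})"
proof
  assume causal: "causal (fun_of_square t)"
  show "\<forall>p. depends_only (t p) {x. tri_le x p}"
  proof (intro allI, unfold depends_only_iff, intro allI impI)
    fix p and a b :: "idx \<Rightarrow> bool" assume "\<forall>y\<in>{x. tri_le x p}. a y = b y"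
    then have "agree_below (Suc (prod_encode p)) (a \<circ> prod_decode) (b \<circ> prod_decode)"
      unfolding agree_below_def tri_le_iff_prod_encode
      by (metis comp_apply less_Suc_eq_le mem_Collect_eq prod_decode_inverse)
    then show "eval_trm (t p) a = eval_trm (t p) b"
      using causal unfolding causal_iff by (metis fun_of_square_comp_decode prod_encode_inverse)
  qed
next
  assume invariant: "\<forall>p. depends_only (t p) {x. tri_le x p}"
  show "causal (fun_of_square t)"
    unfolding causal_iff
  proof (intro allI impI)
    fix c d :: "nat \<Rightarrow> bool" and k assume "agree_below (Suc k) c d"
    then have "\<forall>y\<in>{x. tri_le x (prod_decode k)}. (c \<circ> prod_encode) y = (d \<circ> prod_encode) y"
      by (simp add: agree_below_def tri_le_iff_prod_encode le_imp_less_Suc)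
    then show "fun_of_square t c k = fun_of_square t d k"
      using invariant unfolding fun_of_square_def depends_only_iff by blast
  qed
qed

lemma var_determined_by_if_determining:
  assumes "determining (fun_of_square t)"
  shows "\<exists>F. finite F \<and> var_determined_by x t F"
proof -
  obtain N where N: "\<And>c d. agree_below N (fun_of_square t c) (fun_of_square t d)
      \<Longrightarrow> agree_below (Suc (prod_encode x)) c d"
    using determiningE[OF assms] by blast
  have "var_determined_by x t (prod_decode ` {..<N})"
    unfolding var_determined_by_def
  proof (intro allI impI)
    fix a b assume "\<forall>p\<in>prod_decode ` {..<N}. eval_trm (t p) a = eval_trm (t p) b"
    then have "agree_below N (fun_of_square t (a \<circ> prod_decode))
        (fun_of_square t (b \<circ> prod_decode))"
      by (simp add: agree_below_def fun_of_square_comp_decode)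
    then show "a x = b x"
      using N[unfolded agree_below_Suc] by (metis comp_apply prod_encode_inverse)
  qed
  then show ?thesis by blast
qed

lemma determining_if_var_determined_by:
  assumes "\<forall>x. \<exists>F. finite F \<and> var_determined_by x t F"
  shows "determining (fun_of_square t)"
  unfolding determining_def
proof
  fix n
  obtain D where D: "\<And>x. finite (D x)" "\<And>x. var_determined_by x t (D x)"
    using assms by metis
  have "finite (\<Union>i<n. D (prod_decode i))" using D(1) by blast
  then obtain N where N: "\<And>p. p \<in> (\<Union>i<n. D (prod_decode i)) \<Longrightarrow> prod_encode p < N"
    by (metis finite_imageI finite_nat_set_iff_bounded imageI)
  have "agree_below n c d" if "agree_below N (fun_of_square t c) (fun_of_square t d)" for c d
    unfolding agree_below_def
  proof (intro allI impI)
    fix i assume "i < n"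
    then have "\<forall>p\<in>D (prod_decode i).
        eval_trm (t p) (c \<circ> prod_encode) = eval_trm (t p) (d \<circ> prod_encode)"
      using that N unfolding agree_below_def fun_of_square_def by fastforce
    then show "c i = d i"
      using D(2) unfolding var_determined_by_def by (metis comp_apply prod_decode_inverse)
  qed
  then show "\<exists>N. \<forall>c d. agree_below N (fun_of_square t c) (fun_of_square t d) \<longrightarrow> agree_below n c d"
    by blast
qed

lemma Qstar_iff: "t \<in> Qstar \<longleftrightarrow> causal (fun_of_square t) \<and> determining (fun_of_square t)"
  unfolding Qstar_def causal_fun_of_square_iff
  using var_determined_by_if_determining determining_if_var_determined_by by blast

lemma fun_of_square_subst:
  "fun_of_square (subst_square t \<phi>) c = fun_of_square t (fun_of_square \<phi> c)"
  by (auto simp: fun_of_square_def subst_square_def eval_subst_trm comp_def)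

text \<open>Entry p reads the variables with codes 0, ..., prod_encode p; the bits beyond the list
are filled with False, which causality of G makes irrelevant.\<close>

definition square_of_fun :: "((nat \<Rightarrow> bool) \<Rightarrow> nat \<Rightarrow> bool) \<Rightarrow> square" where
  "square_of_fun G p =
     (map prod_decode [0..<Suc (prod_encode p)],
      \<lambda>bs. G (\<lambda>i. i < length bs \<and> bs ! i) (prod_encode p))"

lemma fun_of_square_of_fun:
  assumes "causal G"
  shows "fun_of_square (square_of_fun G) = G"
proof (intro ext)
  fix c k
  have "(\<lambda>i. i < Suc k \<and> map c [0..<Suc k] ! i) = (\<lambda>i. i < Suc k \<and> c i)"
    by (auto simp del: upt_Suc)
  then have "fun_of_square (square_of_fun G) c k = G (\<lambda>i. i < Suc k \<and> c i) k"
    by (simp add: fun_of_square_def square_of_fun_def eval_trm_def comp_def del: upt_Suc)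
  also have "\<dots> = G c k"
    using assms unfolding causal_iff agree_below_def by auto
  finally show "fun_of_square (square_of_fun G) c k = G c k" .
qed

lemma square_of_fun_in_Qstar: "causal G \<Longrightarrow> determining G \<Longrightarrow> square_of_fun G \<in> Qstar"
  by (simp add: Qstar_iff fun_of_square_of_fun)

lemma Qstar_le_iff:
  "Qstar_le t s \<longleftrightarrow>
     (\<exists>\<phi>. causal \<phi> \<and> determining \<phi> \<and> (\<forall>c. fun_of_square t c = fun_of_square s (\<phi> c)))"
proof -
  have subst_iff: "(\<forall>p. t p =\<^sup>* subst_square s \<phi> p)
      \<longleftrightarrow> (\<forall>c. fun_of_square t c = fun_of_square s (fun_of_square \<phi> c))" for \<phi>
  proof
    assume "\<forall>p. t p =\<^sup>* subst_square s \<phi> p"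
    then have "fun_of_square t c = fun_of_square (subst_square s \<phi>) c" for c
      by (simp add: fun_eq_iff fun_of_square_def trm_eq_def del: split_paired_All)
    then show "\<forall>c. fun_of_square t c = fun_of_square s (fun_of_square \<phi> c)"
      by (simp add: fun_of_square_subst)
  next
    assume "\<forall>c. fun_of_square t c = fun_of_square s (fun_of_square \<phi> c)"
    then have "fun_of_square t (a \<circ> prod_decode) (prod_encode p)
        = fun_of_square (subst_square s \<phi>) (a \<circ> prod_decode) (prod_encode p)" for a p
      by (simp add: fun_of_square_subst)
    then show "\<forall>p. t p =\<^sup>* subst_square s \<phi> p"
      by (simp add: trm_eq_def fun_of_square_comp_decode)
  qed
  show ?thesis
  proof
    assume "Qstar_le t s"
    then show "\<exists>\<phi>. causal \<phi> \<and> determining \<phi> \<and> (\<forall>c. fun_of_square t c = fun_of_square s (\<phi> c))"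
      unfolding Qstar_le_def subst_iff by (auto simp: Qstar_iff)
  next
    assume "\<exists>\<phi>. causal \<phi> \<and> determining \<phi> \<and> (\<forall>c. fun_of_square t c = fun_of_square s (\<phi> c))"
    then obtain \<phi> where "causal \<phi>" "determining \<phi>" "\<forall>c. fun_of_square t c = fun_of_square s (\<phi> c)"
      by blast
    then show "Qstar_le t s"
      unfolding Qstar_le_def subst_iff
      by (metis square_of_fun_in_Qstar fun_of_square_of_fun)
  qed
qed

lemma Qstar_le_refl: "Qstar_le t t"
  unfolding Qstar_le_iff using causal_id determining_id by blast

lemma Qstar_le_trans: "Qstar_le t s \<Longrightarrow> Qstar_le s u \<Longrightarrow> Qstar_le t u"
  unfolding Qstar_le_iff by (metis causal_comp determining_comp)

lemma Qstar_reparametrise: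
  assumes "t \<in> Qstar" "causal \<phi>" "determining \<phi>"
  obtains t' where "t' \<in> Qstar" "Qstar_le t' t" "fun_of_square t' = (\<lambda>c. fun_of_square t (\<phi> c))"
proof
  let ?G = "\<lambda>c. fun_of_square t (\<phi> c)"
  have G: "causal ?G" "determining ?G"
    using assms by (simp_all add: Qstar_iff causal_comp determining_comp)
  show "square_of_fun ?G \<in> Qstar" using square_of_fun_in_Qstar[OF G] .
  show "fun_of_square (square_of_fun ?G) = ?G" using fun_of_square_of_fun[OF G(1)] .
  then show "Qstar_le (square_of_fun ?G) t"
    unfolding Qstar_le_iff using assms(2,3) by auto
qed

section \<open>Range trees\<close>

definition range_tree :: "((nat \<Rightarrow> bool) \<Rightarrow> nat \<Rightarrow> bool) \<Rightarrow> bool list set" where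
  "range_tree F = {map (F c) [0..<n] | c n. True}"

lemma range_tree_comp_subset: "range_tree (\<lambda>c. F (G c)) \<subseteq> range_tree F"
  unfolding range_tree_def by blast

lemma prefix_map_upt:
  assumes "n \<le> m"
  shows "prefix (map f [0..<n]) (map f [0..<m])"
proof -
  have "map f [0..<n] = take n (map f [0..<m])" using assms by (simp add: take_map)
  then show ?thesis by (metis take_is_prefix)
qed

lemma prefix_nth: "prefix xs ys \<Longrightarrow> i < length xs \<Longrightarrow> ys ! i = xs ! i"
  by (auto simp: prefix_def nth_append)

lemma prefix_of_map_upt:
  assumes "prefix u (map f [0..<n])"
  shows "u = map f [0..<length u]"
proof -
  have "length u \<le> n" using prefix_length_le[OF assms] by simp
  from assms obtain zs where "map f [0..<n] = u @ zs" by (auto simp: prefix_def)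
  then have "u = take (length u) (map f [0..<n])" by simp
  also have "\<dots> = map f [0..<length u]"
    using \<open>length u \<le> n\<close> by (simp add: take_map min_def)
  finally show ?thesis .
qed

lemma map_upt_eq_iff_agree_below: "map f [0..<n] = map g [0..<n] \<longleftrightarrow> agree_below n f g"
  by (auto simp: agree_below_def)

lemma perfect_range_tree:
  assumes "causal F" "determining F"
  shows "perfect_tree (range_tree F)"
  unfolding perfect_tree_def
proof (intro conjI ballI allI impI)
  show "range_tree F \<noteq> {}" unfolding range_tree_def by blast
next
  fix s u assume "s \<in> range_tree F" "prefix u s"
  then show "u \<in> range_tree F"
    unfolding range_tree_def using prefix_of_map_upt by blast
next
  fix s assume "s \<in> range_tree F"
  then obtain c n where s: "s = map (F c) [0..<n]" unfolding range_tree_def by blast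
  txt \<open>Flipping input bit n changes some output bit but none below n, so the first output
    bit that changes lies at a splitting node above s.\<close>
  define d where "d = c(n := \<not> c n)"
  have "agree_below n c d" by (simp add: agree_below_def d_def)
  then have agree_n: "agree_below n (F c) (F d)" using causalD[OF assms(1)] by blast
  obtain N where "\<And>c d. agree_below N (F c) (F d) \<Longrightarrow> agree_below (Suc n) c d"
    using determiningE[OF assms(2)] by blast
  then have "\<not> agree_below N (F c) (F d)" unfolding d_def by (metis agree_below_Suc fun_upd_same)
  then have "\<exists>j. F c j \<noteq> F d j" by (auto simp: agree_below_def)
  define j where "j = (LEAST j. F c j \<noteq> F d j)"
  have differ: "F c j \<noteq> F d j" unfolding j_def using \<open>\<exists>j. F c j \<noteq> F d j\<close> by (rule LeastI_ex)
  have agree_j: "agree_below j (F c) (F d)"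
    unfolding agree_below_def j_def using not_less_Least by blast
  have "n \<le> j" using agree_n differ by (auto simp: agree_below_def not_le[symmetric])
  define u where "u = map (F c) [0..<j]"
  have "u @ [F c j] = map (F c) [0..<Suc j]" by (simp add: u_def)
  moreover have "u = map (F d) [0..<j]"
    unfolding u_def map_upt_eq_iff_agree_below by (rule agree_j)
  then have "u @ [F d j] = map (F d) [0..<Suc j]" by simp
  ultimately have "u @ [F c j] \<in> range_tree F" "u @ [F d j] \<in> range_tree F"
    unfolding range_tree_def by blast+
  moreover have "prefix s u" unfolding s u_def using \<open>n \<le> j\<close> by (rule prefix_map_upt)
  ultimately show "\<exists>u. prefix s u \<and> u @ [False] \<in> range_tree F \<and> u @ [True] \<in> range_tree F"
    using differ by (cases "F c j") auto
qed

section \<open>The canonical parametrisation of a perfect tree\<close>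

definition split_above :: "bool list set \<Rightarrow> bool list \<Rightarrow> bool list" where
  "split_above T u = (SOME w. prefix u w \<and> w @ [False] \<in> T \<and> w @ [True] \<in> T)"

primrec splitting_node :: "bool list set \<Rightarrow> (nat \<Rightarrow> bool) \<Rightarrow> nat \<Rightarrow> bool list" where
  "splitting_node T c 0 = split_above T []"
| "splitting_node T c (Suc n) = split_above T (splitting_node T c n @ [c n])"

definition branch_map :: "bool list set \<Rightarrow> (nat \<Rightarrow> bool) \<Rightarrow> nat \<Rightarrow> bool" where
  "branch_map T c k = splitting_node T c (Suc k) ! k"

lemma splitting_node_cong: "agree_below n c d \<Longrightarrow> splitting_node T c n = splitting_node T d n"
  by (induction n) (simp_all add: agree_below_Suc)

lemma causal_branch_map: "causal (branch_map T)"
  unfolding causal_iff branch_map_def using splitting_node_cong by metis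

lemma splitting_node_length_bounded: "\<exists>B. \<forall>c. length (splitting_node T c n) \<le> B"
proof -
  have "range (\<lambda>c. splitting_node T c n) \<subseteq> (\<lambda>\<sigma>. splitting_node T (\<lambda>i. \<sigma> ! i) n) ` {\<sigma>. length \<sigma> = n}"
  proof
    fix w assume "w \<in> range (\<lambda>c. splitting_node T c n)"
    then obtain c where "w = splitting_node T c n" by blast
    also have "\<dots> = splitting_node T (\<lambda>i. map c [0..<n] ! i) n"
      by (rule splitting_node_cong) (simp add: agree_below_def)
    finally show "w \<in> (\<lambda>\<sigma>. splitting_node T (\<lambda>i. \<sigma> ! i) n) ` {\<sigma>. length \<sigma> = n}" by force
  qed
  moreover have "finite {\<sigma> :: bool list. length \<sigma> = n}"
    using finite_lists_length_eq[of "UNIV :: bool set" n] by simp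
  ultimately have "finite (length ` range (\<lambda>c. splitting_node T c n))"
    by (meson finite_imageI finite_subset)
  then show ?thesis by (auto simp: finite_nat_set_iff_bounded_le)
qed

context
  fixes T assumes perfect: "perfect_tree T"
begin

lemma split_above:
  assumes "u \<in> T"
  shows "prefix u (split_above T u)" "split_above T u @ [b] \<in> T"
proof -
  have "\<exists>w. prefix u w \<and> w @ [False] \<in> T \<and> w @ [True] \<in> T"
    using perfect assms unfolding perfect_tree_def by blast
  then have split: "prefix u (split_above T u) \<and> split_above T u @ [False] \<in> T
      \<and> split_above T u @ [True] \<in> T"
    unfolding split_above_def by (rule someI_ex)
  then show "prefix u (split_above T u)" by blast
  show "split_above T u @ [b] \<in> T" using split by (cases b) simp_all
qed

lemma splitting_node_child: "splitting_node T c n @ [b] \<in> T"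
proof (induction n arbitrary: b)
  case 0
  have "[] \<in> T" using perfect unfolding perfect_tree_def by (metis Nil_prefix ex_in_conv)
  then show ?case by (simp add: split_above)
next
  case (Suc n)
  then show ?case by (simp add: split_above)
qed

lemma splitting_node_in_tree: "splitting_node T c n \<in> T"
  using perfect splitting_node_child unfolding perfect_tree_def by (metis prefixI)

lemma prefix_splitting_node_Suc:
  "prefix (splitting_node T c n @ [c n]) (splitting_node T c (Suc n))"
  by (simp add: split_above splitting_node_child)

lemma splitting_node_mono: "n \<le> m \<Longrightarrow> prefix (splitting_node T c n) (splitting_node T c m)"
proof (induction m rule: dec_induct)
  case (step m)
  then show ?case
    using prefix_splitting_node_Suc[of c m] by (metis prefix_order.trans prefix_snoc)
qed simp

lemma length_splitting_node_ge: "n \<le> length (splitting_node T c n)"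
proof (induction n)
  case (Suc n)
  then show ?case using prefix_length_le[OF prefix_splitting_node_Suc[of c n]] by simp
qed simp

lemma splitting_node_eq_branch_map:
  "splitting_node T c n = map (branch_map T c) [0..<length (splitting_node T c n)]"
proof (rule nth_equalityI)
  fix j assume "j < length (splitting_node T c n)"
  moreover have "j < length (splitting_node T c (Suc j))"
    using length_splitting_node_ge[of "Suc j" c] by simp
  ultimately have "splitting_node T c n ! j = splitting_node T c (Suc j) ! j"
    using splitting_node_mono by (metis nat_le_linear prefix_nth)
  then show "splitting_node T c n ! j
      = map (branch_map T c) [0..<length (splitting_node T c n)] ! j"
    using \<open>j < length (splitting_node T c n)\<close> by (simp add: branch_map_def)
qed simp

lemma branch_map_at_splitting_node: "branch_map T c (length (splitting_node T c n)) = c n"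
proof -
  let ?l = "length (splitting_node T c n)"
  have "prefix (splitting_node T c n @ [c n])
      (map (branch_map T c) [0..<length (splitting_node T c (Suc n))])"
    using prefix_splitting_node_Suc splitting_node_eq_branch_map by metis
  then show ?thesis
    using prefix_nth[of _ _ ?l] prefix_length_le by fastforce
qed

lemma range_tree_branch_map_subset: "range_tree (branch_map T) \<subseteq> T"
proof
  fix s assume "s \<in> range_tree (branch_map T)"
  then obtain c n where s: "s = map (branch_map T c) [0..<n]" unfolding range_tree_def by blast
  have "prefix s (splitting_node T c n)"
    unfolding s using splitting_node_eq_branch_map length_splitting_node_ge prefix_map_upt by metis
  then show "s \<in> T"
    using perfect splitting_node_in_tree unfolding perfect_tree_def by blast
qed

lemma determining_branch_map: "determining (branch_map T)"
  unfolding determining_def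
proof
  fix n
  obtain B where B: "\<And>c. length (splitting_node T c n) \<le> B"
    using splitting_node_length_bounded by blast
  have "agree_below m c d" if agree: "agree_below (Suc B) (branch_map T c) (branch_map T d)"
    and "m \<le> n" for c d m
    using \<open>m \<le> n\<close>
  proof (induction m)
    case (Suc m)
    let ?l = "length (splitting_node T c m)"
    have "agree_below m c d" using Suc by simp
    then have same_node: "splitting_node T c m = splitting_node T d m" by (rule splitting_node_cong)
    have "?l \<le> length (splitting_node T c n)"
      using Suc.prems prefix_length_le splitting_node_mono by (metis Suc_leD)
    then have "branch_map T c ?l = branch_map T d ?l"
      using agree B[of c] by (simp add: agree_below_def)
    then have "c m = d m"
      using branch_map_at_splitting_node same_node by metis
    then show ?case by (simp add: agree_below_Suc \<open>agree_below m c d\<close>)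
  qed (simp add: agree_below_def)
  then show "\<exists>N. \<forall>c d. agree_below N (branch_map T c) (branch_map T d) \<longrightarrow> agree_below n c d"
    by blast
qed

end

section \<open>Factoring maps with nested range trees\<close>

lemma determining_bitwise_modulus:
  assumes "determining F"
  obtains N where "\<And>k b b'. agree_below (N k) (F b) (F b') \<Longrightarrow> b k = b' k"
proof -
  have "\<forall>k. \<exists>N. \<forall>b b'. agree_below N (F b) (F b') \<longrightarrow> agree_below (Suc k) b b'"
    using assms unfolding determining_def by blast
  then show thesis using that by (metis agree_below_Suc)
qed

lemma range_tree_subset_preimage:
  assumes "range_tree Ft \<subseteq> range_tree Fs"
  shows "\<exists>b. agree_below n (Fs b) (Ft c)"
proof -
  have "map (Ft c) [0..<n] \<in> range_tree Fs" using assms unfolding range_tree_def by blast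
  then obtain b m where eq: "map (Ft c) [0..<n] = map (Fs b) [0..<m]"
    unfolding range_tree_def by blast
  moreover have "m = n" using arg_cong[OF eq, of length] by simp
  ultimately show ?thesis unfolding map_upt_eq_iff_agree_below[symmetric] by auto
qed

lemma range_tree_subset_lift:
  assumes causal_s: "causal Fs" and "determining Fs" and causal_t: "causal Ft"
    and "range_tree Ft \<subseteq> range_tree Fs"
  obtains \<Phi> N where "\<And>c. Fs (\<Phi> c) = Ft c"
    and "\<And>k c c'. agree_below (N k) c c' \<Longrightarrow> \<Phi> c k = \<Phi> c' k"
proof -
  obtain N where N: "\<And>k b b'. agree_below (N k) (Fs b) (Fs b') \<Longrightarrow> b k = b' k"
    using determining_bitwise_modulus[OF \<open>determining Fs\<close>] by blast
  have bit_unique: "b k = b' k"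
    if "agree_below (N k) (Fs b) (Ft c)" "agree_below (N k) (Fs b') (Ft c)" for b b' k c
    using that N unfolding agree_below_def by metis
  define pre where "pre c n = (SOME b. agree_below n (Fs b) (Ft c))" for c n
  have pre: "agree_below n (Fs (pre c n)) (Ft c)" for c n
    unfolding pre_def using range_tree_subset_preimage[OF \<open>range_tree Ft \<subseteq> _\<close>] by (rule someI_ex)
  define \<Phi> where "\<Phi> c k = pre c (N k) k" for c k
  show thesis
  proof
    fix c
    show "Fs (\<Phi> c) = Ft c"
    proof
      fix j
      define M where "M = Suc j + (\<Sum>i\<le>j. N i)"
      have "\<Phi> c i = pre c M i" if "i \<le> j" for i
      proof -
        have "N i \<le> (\<Sum>i\<le>j. N i)" using that by (intro member_le_sum) auto
        then have "N i \<le> M" by (simp add: M_def)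
        then show ?thesis
          unfolding \<Phi>_def using bit_unique[OF pre agree_below_mono[OF pre]] by blast
      qed
      then have "agree_below (Suc j) (\<Phi> c) (pre c M)" by (simp add: agree_below_def less_Suc_eq_le)
      then have "agree_below (Suc j) (Fs (\<Phi> c)) (Fs (pre c M))" by (rule causalD[OF causal_s])
      moreover have "agree_below (Suc j) (Fs (pre c M)) (Ft c)"
        using agree_below_mono[OF pre] by (simp add: M_def)
      ultimately show "Fs (\<Phi> c) j = Ft c j" by (simp add: agree_below_def)
    qed
  next
    fix k and c c' :: "nat \<Rightarrow> bool" assume "agree_below (N k) c c'"
    then have "agree_below (N k) (Ft c) (Ft c')" by (rule causalD[OF causal_t])
    then have "agree_below (N k) (Fs (pre c (N k))) (Ft c')"
      using pre[of "N k" c] by (simp add: agree_below_def)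
    then show "\<Phi> c k = \<Phi> c' k" unfolding \<Phi>_def using bit_unique pre by blast
  qed
qed

definition spread :: "(nat \<Rightarrow> nat) \<Rightarrow> (nat \<Rightarrow> bool) \<Rightarrow> nat \<Rightarrow> bool" where
  "spread h d m \<longleftrightarrow> (\<exists>i. h i = m \<and> d i)"

context
  fixes h :: "nat \<Rightarrow> nat" assumes "strict_mono h"
begin

lemma spread_at: "spread h d (h i) = d i"
  by (simp add: spread_def strict_mono_eq[OF \<open>strict_mono h\<close>])

lemma agree_below_spread:
  assumes "agree_below n d d'"
  shows "agree_below (h n) (spread h d) (spread h d')"
  unfolding agree_below_def
proof (intro allI impI)
  fix m assume "m < h n"
  then have "d i = d' i" if "h i = m" for i
    using assms that strict_mono_less[OF \<open>strict_mono h\<close>] unfolding agree_below_def by blast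
  then show "spread h d m = spread h d' m" unfolding spread_def by blast
qed

lemma causal_spread: "causal (spread h)"
  unfolding causal_def
proof (intro allI impI)
  fix n and d d' :: "nat \<Rightarrow> bool" assume "agree_below n d d'"
  then have "agree_below (h n) (spread h d) (spread h d')" by (rule agree_below_spread)
  moreover have "n \<le> h n" using strict_mono_imp_increasing[OF \<open>strict_mono h\<close>] .
  ultimately show "agree_below n (spread h d) (spread h d')" by (rule agree_below_mono)
qed

lemma determining_spread: "determining (spread h)"
  unfolding determining_def
proof
  fix n
  have "agree_below n d d'" if "agree_below (h n) (spread h d) (spread h d')" for d d'
    unfolding agree_below_def
  proof (intro allI impI)
    fix i assume "i < n"
    then have "spread h d (h i) = spread h d' (h i)"
      using that strict_mono_less[OF \<open>strict_mono h\<close>] unfolding agree_below_def by blast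
    then show "d i = d' i" by (simp add: spread_at)
  qed
  then show "\<exists>N. \<forall>d d'. agree_below N (spread h d) (spread h d') \<longrightarrow> agree_below n d d'"
    by blast
qed

end

lemma causal_after_delay:
  assumes modulus: "\<And>k c c'. agree_below (N k) c c' \<Longrightarrow> \<Phi> c k = \<Phi> c' k"
  obtains \<psi> where "causal \<psi>" "determining \<psi>" "causal (\<lambda>d. \<Phi> (\<psi> d))"
proof -
  define h where "h k = k + (\<Sum>i<k. N i)" for k
  have "strict_mono h" unfolding strict_mono_Suc_iff h_def by simp
  have "causal (\<lambda>d. \<Phi> (spread h d))"
    unfolding causal_iff
  proof (intro allI impI)
    fix d d' :: "nat \<Rightarrow> bool" and k assume "agree_below (Suc k) d d'"
    moreover have "N k \<le> h (Suc k)" by (simp add: h_def)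
    ultimately have "agree_below (N k) (spread h d) (spread h d')"
      using agree_below_spread[OF \<open>strict_mono h\<close>] agree_below_mono by blast
    then show "\<Phi> (spread h d) k = \<Phi> (spread h d') k" by (rule modulus)
  qed
  with causal_spread[OF \<open>strict_mono h\<close>] determining_spread[OF \<open>strict_mono h\<close>]
  show thesis by (rule that)
qed

lemma range_tree_subset_factor:
  assumes "causal Fs" "determining Fs" "causal Ft" "determining Ft"
    and "range_tree Ft \<subseteq> range_tree Fs"
  obtains \<psi> \<phi> where "causal \<psi>" "determining \<psi>" "causal \<phi>" "determining \<phi>"
    and "\<And>d. Ft (\<psi> d) = Fs (\<phi> d)"
proof -
  obtain \<Phi> N where lift: "\<And>c. Fs (\<Phi> c) = Ft c"
    and modulus: "\<And>k c c'. agree_below (N k) c c' \<Longrightarrow> \<Phi> c k = \<Phi> c' k"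
    using range_tree_subset_lift[OF assms(1,2,3,5)] by blast
  obtain \<psi> where \<psi>: "causal \<psi>" "determining \<psi>" "causal (\<lambda>d. \<Phi> (\<psi> d))"
    using causal_after_delay[where \<Phi> = \<Phi>, OF modulus] by blast
  have "determining (\<lambda>d. Fs (\<Phi> (\<psi> d)))"
    unfolding lift using determining_comp[OF assms(4) \<psi>(2)] .
  then have "determining (\<lambda>d. \<Phi> (\<psi> d))"
    by (rule determining_comp_causalD[OF assms(1)])
  then show thesis
    by (rule that[OF \<psi>]) (simp add: lift)
qed

section \<open>Dense projections and regular open algebras\<close>

lemma regular_open_iff:
  "U \<in> regular_open P le \<longleftrightarrow> U \<subseteq> P \<and> (\<forall>p\<in>U. \<forall>q\<in>P. le q p \<longrightarrow> (\<exists>r\<in>U. le r q))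
      \<and> (\<forall>p\<in>P. (\<forall>q\<in>P. le q p \<longrightarrow> (\<exists>r\<in>U. le r q)) \<longrightarrow> p \<in> U)"
  unfolding regular_open_def by blast

lemma regular_openD:
  "U \<in> regular_open P le \<Longrightarrow> p \<in> P \<Longrightarrow> (\<And>q. q \<in> P \<Longrightarrow> le q p \<Longrightarrow> \<exists>r\<in>U. le r q) \<Longrightarrow> p \<in> U"
  unfolding regular_open_iff by blast

lemma regular_open_subset: "U \<in> regular_open P le \<Longrightarrow> U \<subseteq> P"
  unfolding regular_open_iff by blast

lemma regular_open_downward_closed:
  assumes trans: "\<And>p q r. p \<in> P \<Longrightarrow> q \<in> P \<Longrightarrow> r \<in> P \<Longrightarrow> le p q \<Longrightarrow> le q r \<Longrightarrow> le p r"
    and U: "U \<in> regular_open P le" and "p \<in> U" "q \<in> P" "le q p"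
  shows "q \<in> U"
proof (rule regular_openD[OF U \<open>q \<in> P\<close>])
  fix q' assume "q' \<in> P" "le q' q"
  moreover have "p \<in> P" using regular_open_subset[OF U] \<open>p \<in> U\<close> by blast
  ultimately have "le q' p" using trans \<open>q \<in> P\<close> \<open>le q p\<close> by blast
  then show "\<exists>r\<in>U. le r q'" using U \<open>p \<in> U\<close> \<open>q' \<in> P\<close> unfolding regular_open_iff by blast
qed

locale dense_projection =
  fixes P :: "'a set" and le :: "'a \<Rightarrow> 'a \<Rightarrow> bool"
    and Q :: "'b set" and leQ :: "'b \<Rightarrow> 'b \<Rightarrow> bool"
    and \<pi> :: "'a \<Rightarrow> 'b"
  assumes refl_P: "p \<in> P \<Longrightarrow> le p p"
    and trans_P: "p \<in> P \<Longrightarrow> p' \<in> P \<Longrightarrow> p'' \<in> P \<Longrightarrow> le p p' \<Longrightarrow> le p' p'' \<Longrightarrow> le p p''"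
    and refl_Q: "q \<in> Q \<Longrightarrow> leQ q q"
    and trans_Q: "q \<in> Q \<Longrightarrow> q' \<in> Q \<Longrightarrow> q'' \<in> Q \<Longrightarrow> leQ q q' \<Longrightarrow> leQ q' q'' \<Longrightarrow> leQ q q''"
    and maps_to: "p \<in> P \<Longrightarrow> \<pi> p \<in> Q"
    and monotone: "p \<in> P \<Longrightarrow> p' \<in> P \<Longrightarrow> le p p' \<Longrightarrow> leQ (\<pi> p) (\<pi> p')"
    and dense: "q \<in> Q \<Longrightarrow> \<exists>p\<in>P. leQ (\<pi> p) q"
    and lift: "p \<in> P \<Longrightarrow> q \<in> Q \<Longrightarrow> leQ q (\<pi> p) \<Longrightarrow> \<exists>p'\<in>P. le p' p \<and> leQ (\<pi> p') q"
    and compatible: "p \<in> P \<Longrightarrow> p' \<in> P \<Longrightarrow> leQ (\<pi> p) (\<pi> p') \<Longrightarrow> \<exists>p''\<in>P. le p'' p \<and> le p'' p'"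
begin

definition pull :: "'b set \<Rightarrow> 'a set" where
  "pull V = {p\<in>P. \<pi> p \<in> V}"

definition push :: "'a set \<Rightarrow> 'b set" where
  "push U = {q\<in>Q. \<forall>q'\<in>Q. leQ q' q \<longrightarrow> (\<exists>p\<in>U. leQ (\<pi> p) q')}"

lemma downward_closed_P:
  assumes "U \<in> regular_open P le" "p \<in> U" "p' \<in> P" "le p' p"
  shows "p' \<in> U"
  by (rule regular_open_downward_closed[OF trans_P assms])

lemma downward_closed_Q:
  assumes "V \<in> regular_open Q leQ" "q \<in> V" "q' \<in> Q" "leQ q' q"
  shows "q' \<in> V"
  by (rule regular_open_downward_closed[OF trans_Q assms])

lemma pull_regular_open:
  assumes V: "V \<in> regular_open Q leQ"
  shows "pull V \<in> regular_open P le"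
  unfolding regular_open_iff
proof (intro conjI ballI impI)
  show "pull V \<subseteq> P" unfolding pull_def by blast
next
  fix p q assume "p \<in> pull V" "q \<in> P" "le q p"
  then have "\<pi> q \<in> V"
    using downward_closed_Q[OF V] maps_to monotone unfolding pull_def by blast
  then show "\<exists>r\<in>pull V. le r q" using \<open>q \<in> P\<close> refl_P unfolding pull_def by blast
next
  fix p assume "p \<in> P" and dense_below: "\<forall>q\<in>P. le q p \<longrightarrow> (\<exists>r\<in>pull V. le r q)"
  have "\<pi> p \<in> V"
  proof (rule regular_openD[OF V maps_to[OF \<open>p \<in> P\<close>]])
    fix q assume "q \<in> Q" "leQ q (\<pi> p)"
    then obtain p' where p': "p' \<in> P" "le p' p" "leQ (\<pi> p') q" using lift \<open>p \<in> P\<close> by blast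
    then obtain r where r: "r \<in> P" "\<pi> r \<in> V" "le r p'" using dense_below unfolding pull_def by blast
    then have "leQ (\<pi> r) (\<pi> p')" using monotone p'(1) by blast
    then have "leQ (\<pi> r) q" using trans_Q[OF maps_to maps_to \<open>q \<in> Q\<close>] r(1) p' by blast
    then show "\<exists>r\<in>V. leQ r q" using r by blast
  qed
  then show "p \<in> pull V" using \<open>p \<in> P\<close> unfolding pull_def by blast
qed

lemma push_regular_open:
  assumes U: "U \<in> regular_open P le"
  shows "push U \<in> regular_open Q leQ"
  unfolding regular_open_iff
proof (intro conjI ballI impI)
  show "push U \<subseteq> Q" unfolding push_def by blast
next
  fix q q' assume "q \<in> push U" "q' \<in> Q" "leQ q' q"
  then have "q' \<in> push U" unfolding push_def using trans_Q by blast
  then show "\<exists>r\<in>push U. leQ r q'" using refl_Q \<open>q' \<in> Q\<close> by blast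
next
  fix q assume "q \<in> Q" and dense_below: "\<forall>q'\<in>Q. leQ q' q \<longrightarrow> (\<exists>r\<in>push U. leQ r q')"
  have "\<exists>p\<in>U. leQ (\<pi> p) q'" if q': "q' \<in> Q" "leQ q' q" for q'
  proof -
    obtain r where r: "r \<in> push U" "leQ r q'" using dense_below q' by blast
    then have "r \<in> Q" unfolding push_def by blast
    then obtain p where p: "p \<in> U" "leQ (\<pi> p) r" using r(1) refl_Q unfolding push_def by blast
    then have "p \<in> P" using regular_open_subset[OF U] by blast
    then show ?thesis using p trans_Q[OF maps_to \<open>r \<in> Q\<close> \<open>q' \<in> Q\<close> _ \<open>leQ r q'\<close>] by blast
  qed
  then show "q \<in> push U" using \<open>q \<in> Q\<close> unfolding push_def by blast
qed

lemma pull_push: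
  assumes U: "U \<in> regular_open P le"
  shows "pull (push U) = U"
proof
  show "U \<subseteq> pull (push U)"
  proof
    fix p assume "p \<in> U"
    then have "p \<in> P" using regular_open_subset[OF U] by blast
    have "\<exists>p'\<in>U. leQ (\<pi> p') q" if q: "q \<in> Q" "leQ q (\<pi> p)" for q
    proof -
      obtain p' where "p' \<in> P" "le p' p" "leQ (\<pi> p') q" using lift[OF \<open>p \<in> P\<close> q] by blast
      then show ?thesis using downward_closed_P[OF U \<open>p \<in> U\<close>] by blast
    qed
    then show "p \<in> pull (push U)"
      using \<open>p \<in> P\<close> maps_to unfolding pull_def push_def by blast
  qed
next
  show "pull (push U) \<subseteq> U"
  proof
    fix p assume "p \<in> pull (push U)"
    then have "p \<in> P" "\<pi> p \<in> push U" unfolding pull_def by auto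
    show "p \<in> U"
    proof (rule regular_openD[OF U \<open>p \<in> P\<close>])
      fix p' assume "p' \<in> P" "le p' p"
      then obtain p1 where "p1 \<in> U" "leQ (\<pi> p1) (\<pi> p')"
        using \<open>\<pi> p \<in> push U\<close> maps_to monotone \<open>p \<in> P\<close> unfolding push_def by blast
      moreover have "p1 \<in> P" using regular_open_subset[OF U] \<open>p1 \<in> U\<close> by blast
      ultimately obtain p'' where "p'' \<in> P" "le p'' p1" "le p'' p'"
        using compatible \<open>p' \<in> P\<close> by blast
      then show "\<exists>r\<in>U. le r p'" using downward_closed_P[OF U \<open>p1 \<in> U\<close>] by blast
    qed
  qed
qed

lemma push_pull:
  assumes V: "V \<in> regular_open Q leQ"
  shows "push (pull V) = V"
proof
  show "push (pull V) \<subseteq> V"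
  proof
    fix q assume q: "q \<in> push (pull V)"
    then have "q \<in> Q" unfolding push_def by blast
    show "q \<in> V"
    proof (rule regular_openD[OF V \<open>q \<in> Q\<close>])
      fix q' assume "q' \<in> Q" "leQ q' q"
      then show "\<exists>r\<in>V. leQ r q'" using q unfolding push_def pull_def by blast
    qed
  qed
next
  show "V \<subseteq> push (pull V)"
  proof
    fix q assume "q \<in> V"
    then have "q \<in> Q" using regular_open_subset[OF V] by blast
    have "\<exists>p\<in>pull V. leQ (\<pi> p) q'" if q': "q' \<in> Q" "leQ q' q" for q'
    proof -
      obtain p where p: "p \<in> P" "leQ (\<pi> p) q'" using dense[OF \<open>q' \<in> Q\<close>] by blast
      then have "leQ (\<pi> p) q" using trans_Q[OF maps_to \<open>q' \<in> Q\<close> \<open>q \<in> Q\<close>] q' by blast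
      then have "\<pi> p \<in> V" using downward_closed_Q[OF V \<open>q \<in> V\<close>] maps_to p(1) by blast
      then show ?thesis using p unfolding pull_def by blast
    qed
    then show "q \<in> push (pull V)" using \<open>q \<in> Q\<close> unfolding push_def by blast
  qed
qed

theorem forcing_equivalence: "forcing_equivalent P le Q leQ"
proof -
  have "bij_betw push (regular_open P le) (regular_open Q leQ)"
  proof (rule bij_betw_byWitness[where f' = pull])
    show "\<forall>U\<in>regular_open P le. pull (push U) = U" using pull_push by blast
    show "\<forall>V\<in>regular_open Q leQ. push (pull V) = V" using push_pull by blast
    show "push ` regular_open P le \<subseteq> regular_open Q leQ" using push_regular_open by blast
    show "pull ` regular_open Q leQ \<subseteq> regular_open P le" using pull_regular_open by blast
  qed
  moreover have "U \<subseteq> V \<longleftrightarrow> push U \<subseteq> push V"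
    if "U \<in> regular_open P le" "V \<in> regular_open P le" for U V
  proof
    assume "U \<subseteq> V"
    then show "push U \<subseteq> push V" unfolding push_def by blast
  next
    assume "push U \<subseteq> push V"
    then have "pull (push U) \<subseteq> pull (push V)" unfolding pull_def by blast
    then show "U \<subseteq> V" using pull_push that by simp
  qed
  ultimately show ?thesis unfolding forcing_equivalent_def by blast
qed

end

section \<open>Q_* and Sacks forcing\<close>

lemma range_tree_in_Sacks: "t \<in> Qstar \<Longrightarrow> range_tree (fun_of_square t) \<in> Sacks"
  by (simp add: Sacks_def Qstar_iff perfect_range_tree)

lemma range_tree_mono: "Qstar_le t s \<Longrightarrow> range_tree (fun_of_square t) \<subseteq> range_tree (fun_of_square s)"
proof -
  assume "Qstar_le t s"
  then obtain \<phi> where "\<forall>c. fun_of_square t c = fun_of_square s (\<phi> c)"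
    unfolding Qstar_le_iff by blast
  then have "fun_of_square t = (\<lambda>c. fun_of_square s (\<phi> c))" by blast
  then show ?thesis using range_tree_comp_subset by simp
qed

lemma Sacks_contains_range_tree:
  assumes "T \<in> Sacks"
  shows "\<exists>t\<in>Qstar. range_tree (fun_of_square t) \<subseteq> T"
proof
  have perfect: "perfect_tree T" using assms by (simp add: Sacks_def)
  let ?t = "square_of_fun (branch_map T)"
  show "?t \<in> Qstar"
    by (rule square_of_fun_in_Qstar[OF causal_branch_map determining_branch_map[OF perfect]])
  show "range_tree (fun_of_square ?t) \<subseteq> T"
    unfolding fun_of_square_of_fun[OF causal_branch_map]
    by (rule range_tree_branch_map_subset[OF perfect])
qed

lemma Qstar_refine_into_Sacks:
  assumes t: "t \<in> Qstar" and "T \<in> Sacks" "T \<subseteq> range_tree (fun_of_square t)"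
  shows "\<exists>t'\<in>Qstar. Qstar_le t' t \<and> range_tree (fun_of_square t') \<subseteq> T"
proof -
  have perfect: "perfect_tree T" using \<open>T \<in> Sacks\<close> by (simp add: Sacks_def)
  have "range_tree (branch_map T) \<subseteq> range_tree (fun_of_square t)"
    using range_tree_branch_map_subset[OF perfect] \<open>T \<subseteq> _\<close> by blast
  moreover have "causal (fun_of_square t)" "determining (fun_of_square t)"
    using t by (simp_all add: Qstar_iff)
  ultimately obtain \<psi> \<phi> where "causal \<phi>" "determining \<phi>"
    and factor: "\<And>d. branch_map T (\<psi> d) = fun_of_square t (\<phi> d)"
    by (metis range_tree_subset_factor causal_branch_map determining_branch_map[OF perfect])
  obtain t' where t': "t' \<in> Qstar" "Qstar_le t' t" "fun_of_square t' = (\<lambda>d. fun_of_square t (\<phi> d))"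
    using Qstar_reparametrise[OF t \<open>causal \<phi>\<close> \<open>determining \<phi>\<close>] by blast
  have "range_tree (fun_of_square t') \<subseteq> T"
    unfolding t'(3) factor[symmetric]
    using range_tree_comp_subset range_tree_branch_map_subset[OF perfect] by blast
  then show ?thesis using t' by blast
qed

lemma Qstar_compatible_of_range_tree_subset:
  assumes t: "t \<in> Qstar" and s: "s \<in> Qstar"
    and "range_tree (fun_of_square t) \<subseteq> range_tree (fun_of_square s)"
  shows "\<exists>u\<in>Qstar. Qstar_le u t \<and> Qstar_le u s"
proof -
  have "causal (fun_of_square t)" "determining (fun_of_square t)"
    "causal (fun_of_square s)" "determining (fun_of_square s)"
    using t s by (simp_all add: Qstar_iff)
  then obtain \<psi> \<phi> where "causal \<psi>" "determining \<psi>" "causal \<phi>" "determining \<phi>"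
    and factor: "\<And>d. fun_of_square t (\<psi> d) = fun_of_square s (\<phi> d)"
    using range_tree_subset_factor \<open>range_tree _ \<subseteq> _\<close> by metis
  obtain u where u: "u \<in> Qstar" "Qstar_le u t" "fun_of_square u = (\<lambda>d. fun_of_square t (\<psi> d))"
    using Qstar_reparametrise[OF t \<open>causal \<psi>\<close> \<open>determining \<psi>\<close>] by blast
  have "Qstar_le u s"
    unfolding Qstar_le_iff u(3) factor using \<open>causal \<phi>\<close> \<open>determining \<phi>\<close> by blast
  then show ?thesis using u by blast
qed

theorem mainTheorem3:
  shows "forcing_equivalent Qstar Qstar_le Sacks Sacks_le"
proof -
  interpret dense_projection Qstar Qstar_le Sacks Sacks_le "\<lambda>t. range_tree (fun_of_square t)"
  proof
    show "Qstar_le t t" for t by (rule Qstar_le_refl)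
    show "Qstar_le t s \<Longrightarrow> Qstar_le s u \<Longrightarrow> Qstar_le t u" for t s u by (rule Qstar_le_trans)
    show "Sacks_le T T" for T by (simp add: Sacks_le_def)
    show "Sacks_le T S \<Longrightarrow> Sacks_le S R \<Longrightarrow> Sacks_le T R" for T S R by (simp add: Sacks_le_def)
  qed (simp_all add: Sacks_le_def range_tree_in_Sacks range_tree_mono Sacks_contains_range_tree
      Qstar_refine_into_Sacks Qstar_compatible_of_range_tree_subset)
  show ?thesis by (rule forcing_equivalence)
qed

end
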